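(* Let $F$ be a simple $\Bbbk\mathbf{FA}$-module. Then either $F\cong\Bbbk_{\mathbf 0}$, or there exists $n\in\mathbb N$ such that $F$ is a quotient of $\overline P^{\otimes n}$. Moreover, if $t\in\mathbb N$ and $F$ is a composition factor of $\overline P^{\otimes t}$, then $F(\mathbf{t+1})\neq0$.
   Context: Let $\Bbbk$ be a field. $\mathbf{FA}$ denotes the category of finite sets and all maps, and $\mathbf{FI}$, $\mathbf{FS}$, $\mathbf{FB}$ its wide subcategories of injections, surjections and bijections respectively; $\mathbf n=\{1,\dots,n\}$ for $n\in\mathbb N$ ($\mathbf 0=\emptyset$), and $\mathfrak S_n$ is the symmetric group. For a category $\mathcal C$, $\Bbbk\mathcal C(X,Y)$ is the $\Bbbk$-vector space with basis $\mathcal C(X,Y)$. A $\Bbbk\mathbf{FA}$-module is a functor from $\mathbf{FA}$ to $\Bbbk$-vector spaces (these form the abelian category $\mathcal F(\mathbf{FA})$); $\otimes$ denotes the pointwise tensor product over $\Bbbk$, and $\hom_{\Bbbk\mathbf{FA}}$ denotes natural transformations. $P^{\mathbf{FA}}_{\mathbf n}:=\Bbbk\mathbf{FA}(\mathbf n,-)$, so $P^{\mathbf{FA}}_{\mathbf n}(X)\cong\Bbbk[X]^{\otimes n}$ (where $\Bbbk[X]$ has basis $\{[x]:x\in X\}$), with the right $\mathfrak S_n$-action by precomposition, equivalently place permutation of tensor factors; write $P^{\mathbf{FA}}:=P^{\mathbf{FA}}_{\mathbf 1}$. Let $\overline{\Bbbk}$ be the functor with value $\Bbbk$ on non-empty sets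 (all maps acting by the identity) and $0$ on $\emptyset$, and $\Bbbk_{\mathbf 0}$ the functor with value $\Bbbk$ on $\emptyset$ and $0$ on non-empty sets. $\overline P$ is the kernel of the surjection $P^{\mathbf{FA}}\to\overline\Bbbk$, $[x]\mapsto 1$; thus $\overline P(X)=\{\sum_x a_x[x]:\sum_x a_x=0\}$. For $n\ge1$, $\overline P^{\otimes n}$ is the $n$-fold pointwise tensor power, a subfunctor of $P^{\mathbf{FA}}_{\mathbf n}$ stable under the place-permutation right action of $\mathfrak S_n$; by convention $\overline P^{\otimes 0}:=\overline\Bbbk$. *)

theory Defs
  imports Complex_Main "HOL-Library.FuncSet" "HOL-Library.Function_Algebras"
begin

text \<open>Skeleton of FA: objects are the naturals m (standing for the set {0..<m}),
  morphisms m -> m' are the extensional functions {0..<m} ->E {0..<m'}.\<close>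

definition FA_hom :: "nat \<Rightarrow> nat \<Rightarrow> (nat \<Rightarrow> nat) set" where
  "FA_hom m m' = {0..<m} \<rightarrow>\<^sub>E {0..<m'}"

text \<open>A kFA-module: ambient k-vector space (type 'v with scalar multiplication sc),
  a subspace V m for each object m, and linear maps act f m m' : V m -> V m'
  for f : m -> m', satisfying functoriality.\<close>

definition FA_module ::
  "('k::field \<Rightarrow> 'v::ab_group_add \<Rightarrow> 'v) \<Rightarrow> (nat \<Rightarrow> 'v set)
    \<Rightarrow> ((nat \<Rightarrow> nat) \<Rightarrow> nat \<Rightarrow> nat \<Rightarrow> 'v \<Rightarrow> 'v) \<Rightarrow> bool" where
  "FA_module sc V act \<longleftrightarrow>
     vector_space sc \<and>
     (\<forall>m. module.subspace sc (V m)) \<and>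
     (\<forall>m m' f. f \<in> FA_hom m m' \<longrightarrow>
        (\<forall>x\<in>V m. act f m m' x \<in> V m') \<and>
        (\<forall>x\<in>V m. \<forall>y\<in>V m. act f m m' (x + y) = act f m m' x + act f m m' y) \<and>
        (\<forall>c. \<forall>x\<in>V m. act f m m' (sc c x) = sc c (act f m m' x))) \<and>
     (\<forall>m. \<forall>x\<in>V m. act (restrict id {0..<m}) m m x = x) \<and>
     (\<forall>m m' m'' f g. f \<in> FA_hom m m' \<longrightarrow> g \<in> FA_hom m' m'' \<longrightarrow>
        (\<forall>x\<in>V m. act (compose {0..<m} g f) m m'' x = act g m' m'' (act f m m' x)))"

definition FA_submodule ::
  "('k::field \<Rightarrow> 'v::ab_group_add \<Rightarrow> 'v) \<Rightarrow> (nat \<Rightarrow> 'v set)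
    \<Rightarrow> ((nat \<Rightarrow> nat) \<Rightarrow> nat \<Rightarrow> nat \<Rightarrow> 'v \<Rightarrow> 'v) \<Rightarrow> (nat \<Rightarrow> 'v set) \<Rightarrow> bool" where
  "FA_submodule sc V act W \<longleftrightarrow>
     (\<forall>m. W m \<subseteq> V m \<and> module.subspace sc (W m)) \<and>
     (\<forall>m m' f. f \<in> FA_hom m m' \<longrightarrow> (\<forall>x\<in>W m. act f m m' x \<in> W m'))"

definition FA_simple ::
  "('k::field \<Rightarrow> 'v::ab_group_add \<Rightarrow> 'v) \<Rightarrow> (nat \<Rightarrow> 'v set)
    \<Rightarrow> ((nat \<Rightarrow> nat) \<Rightarrow> nat \<Rightarrow> nat \<Rightarrow> 'v \<Rightarrow> 'v) \<Rightarrow> bool" where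
  "FA_simple sc V act \<longleftrightarrow>
     FA_module sc V act \<and> (\<exists>m. V m \<noteq> {0}) \<and>
     (\<forall>W. FA_submodule sc V act W \<longrightarrow> (\<forall>m. W m = {0}) \<or> W = V)"

definition FA_nat_trans ::
  "('k::field \<Rightarrow> 'v::ab_group_add \<Rightarrow> 'v) \<Rightarrow> (nat \<Rightarrow> 'v set)
    \<Rightarrow> ((nat \<Rightarrow> nat) \<Rightarrow> nat \<Rightarrow> nat \<Rightarrow> 'v \<Rightarrow> 'v)
    \<Rightarrow> ('k \<Rightarrow> 'w::ab_group_add \<Rightarrow> 'w) \<Rightarrow> (nat \<Rightarrow> 'w set)
    \<Rightarrow> ((nat \<Rightarrow> nat) \<Rightarrow> nat \<Rightarrow> nat \<Rightarrow> 'w \<Rightarrow> 'w) \<Rightarrow> (nat \<Rightarrow> 'v \<Rightarrow> 'w) \<Rightarrow> bool" where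
  "FA_nat_trans sc1 V1 act1 sc2 V2 act2 \<phi> \<longleftrightarrow>
     (\<forall>m. \<forall>x\<in>V1 m. \<phi> m x \<in> V2 m) \<and>
     (\<forall>m. \<forall>x\<in>V1 m. \<forall>y\<in>V1 m. \<phi> m (x + y) = \<phi> m x + \<phi> m y) \<and>
     (\<forall>m c. \<forall>x\<in>V1 m. \<phi> m (sc1 c x) = sc2 c (\<phi> m x)) \<and>
     (\<forall>m m' f. f \<in> FA_hom m m' \<longrightarrow>
        (\<forall>x\<in>V1 m. \<phi> m' (act1 f m m' x) = act2 f m m' (\<phi> m x)))"

definition FA_iso where
  "FA_iso sc1 V1 act1 sc2 V2 act2 \<longleftrightarrow>
     (\<exists>\<phi>. FA_nat_trans sc1 V1 act1 sc2 V2 act2 \<phi> \<and> (\<forall>m. bij_betw (\<phi> m) (V1 m) (V2 m)))"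

definition FA_quotient_of where
  "FA_quotient_of sc1 V1 act1 sc2 V2 act2 \<longleftrightarrow>
     (\<exists>\<phi>. FA_nat_trans sc1 V1 act1 sc2 V2 act2 \<phi> \<and> (\<forall>m. \<phi> m ` V1 m = V2 m))"

text \<open>F is a composition factor of M: F is simple and F is isomorphic to N/N' for
  submodules N' \<subseteq> N of M, i.e. F is a quotient of a submodule N of M.\<close>

definition FA_composition_factor where
  "FA_composition_factor sc2 V2 act2 sc1 V1 act1 \<longleftrightarrow>
     FA_simple sc2 V2 act2 \<and>
     (\<exists>N. FA_submodule sc1 V1 act1 N \<and> FA_quotient_of sc1 N act1 sc2 V2 act2)"

definition K0_val :: "nat \<Rightarrow> 'k::field set" where
  "K0_val m = (if m = 0 then UNIV else {0})"

definition K0_act :: "(nat \<Rightarrow> nat) \<Rightarrow> nat \<Rightarrow> nat \<Rightarrow> 'k::field \<Rightarrow> 'k" where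
  "K0_act f m m' x = (if m = 0 \<and> m' = 0 then x else 0)"

text \<open>P_n = kFA(n,-): P_n(m) = k-valued functions on FA_hom n m (basis = maps n -> m,
  i.e. pure tensors [g 0] \<otimes> ... \<otimes> [g (n-1)]), represented inside (nat => nat) => 'k.\<close>

definition Ptens_sc :: "'k::field \<Rightarrow> ((nat \<Rightarrow> nat) \<Rightarrow> 'k) \<Rightarrow> ((nat \<Rightarrow> nat) \<Rightarrow> 'k)" where
  "Ptens_sc c v = (\<lambda>g. c * v g)"

definition Ptens_act :: "nat \<Rightarrow> (nat \<Rightarrow> nat) \<Rightarrow> nat \<Rightarrow> nat
    \<Rightarrow> ((nat \<Rightarrow> nat) \<Rightarrow> 'k::field) \<Rightarrow> ((nat \<Rightarrow> nat) \<Rightarrow> 'k)" where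
  "Ptens_act n f m m' v = (\<lambda>g'. \<Sum>g\<in>{g\<in>FA_hom n m. compose {0..<n} f g = g'}. v g)"

text \<open>Pbar(m) = {sum_x a_x [x] : sum_x a_x = 0}, elements a : nat => 'k supported on {0..<m}.\<close>

definition Pbar1 :: "nat \<Rightarrow> (nat \<Rightarrow> 'k::field) set" where
  "Pbar1 m = {a. (\<forall>x\<ge>m. a x = 0) \<and> (\<Sum>x<m. a x) = 0}"

definition pure_tensor :: "nat \<Rightarrow> nat \<Rightarrow> (nat \<Rightarrow> nat \<Rightarrow> 'k::field) \<Rightarrow> ((nat \<Rightarrow> nat) \<Rightarrow> 'k)" where
  "pure_tensor n m a = (\<lambda>g. if g \<in> FA_hom n m then (\<Prod>i<n. a i (g i)) else 0)"

text \<open>Pbar^{\<otimes>n}(m): the span of pure tensors a_0 \<otimes> ... \<otimes> a_(n-1) with a_i \<in> Pbar(m),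
  inside P_n(m); by the convention Pbar^{\<otimes>0} = kbar it is 0 on the empty set
  (for n \<ge> 1 this clause is automatic).\<close>

definition Pbar_tensor :: "nat \<Rightarrow> nat \<Rightarrow> ((nat \<Rightarrow> nat) \<Rightarrow> 'k::field) set" where
  "Pbar_tensor n m = (if m = 0 then {0}
     else module.span Ptens_sc {pure_tensor n m a | a. \<forall>i<n. a i \<in> Pbar1 m})"

end

(*
  If F(\<emptyset>) \<noteq> 0, the subfunctor of F that vanishes on \<emptyset> and the line through a nonzero
  e \<in> F(\<emptyset>) are submodules, so simplicity forces F \<cong> k_0.

  Otherwise pick x \<noteq> 0 in some F(m) and its Yoneda map \<Phi>_x : P^{\<otimes>m} \<rightarrow> F. Choose s maximal
  (over all x) such that \<Phi>_x does not kill Pbar^{\<otimes>s} \<otimes> P^{\<otimes>(m-s)}. Up to a transposition of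
  slots, maximality says that \<Phi>_x kills every tensor with one more Pbar slot, so it sees the last
  m - s slots only through their coefficient sums. Hence v \<mapsto> \<Phi>_x(v \<otimes> [z]^{\<otimes>(m-s)}) does not
  depend on the point z, which makes it a nonzero natural map Pbar^{\<otimes>s} \<rightarrow> F; it is onto
  because F is simple.

  For the second claim, inclusion-exclusion writes the identity of Pbar^{\<otimes>t}(m) as a linear
  combination of the endomorphisms induced by the maps m \<rightarrow> m that fix a set W \<subseteq> {1..m-1} with
  |W| \<le> t and send everything else to 0. These maps factor through t+1, so if F(t+1) = 0, every
  natural map from a submodule of Pbar^{\<otimes>t} to F vanishes, and F cannot be one of its quotients.
*)

theory Submission
  imports Defs
begin

declare atLeast0LessThan[simp]

section \<open>The functors P_n and Pbar^{\<otimes>n}\<close>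

interpretation Ptens: vector_space "Ptens_sc :: 'k::field \<Rightarrow> ((nat \<Rightarrow> nat) \<Rightarrow> 'k) \<Rightarrow> _"
  by unfold_locales (auto simp: Ptens_sc_def fun_eq_iff algebra_simps)

lemma finite_FA_hom [simp]: "finite (FA_hom n m)"
  unfolding FA_hom_def by (rule finite_PiE) auto

lemma FA_hom_target_pos: "f \<in> FA_hom m m' \<Longrightarrow> 0 < m \<Longrightarrow> 0 < m'"
  unfolding FA_hom_def by (auto simp: PiE_iff)

lemma FA_hom_zero_zero: "f \<in> FA_hom 0 0 \<Longrightarrow> f = restrict id {..<0}"
  by (auto simp: FA_hom_def PiE_def extensional_def fun_eq_iff)

lemma compose_in_FA_hom:
  "f \<in> FA_hom m m' \<Longrightarrow> g \<in> FA_hom n m \<Longrightarrow> compose {..<n} f g \<in> FA_hom n m'"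
  unfolding FA_hom_def by (auto simp: compose_def PiE_iff)

lemma Ptens_act_add: "Ptens_act n f m m' (u + w) = Ptens_act n f m m' u + Ptens_act n f m m' w"
  by (simp add: Ptens_act_def fun_eq_iff sum.distrib)

lemma Ptens_act_scale: "Ptens_act n f m m' (Ptens_sc c u) = Ptens_sc c (Ptens_act n f m m' u)"
  by (simp add: Ptens_act_def Ptens_sc_def fun_eq_iff sum_distrib_left)

lemma Ptens_act_zero [simp]: "Ptens_act n f m m' 0 = 0"
  by (simp add: Ptens_act_def fun_eq_iff)

lemma Ptens_act_compose:
  assumes f: "f \<in> FA_hom m m'" and g: "g \<in> FA_hom m' m''"
  shows "Ptens_act n (compose {..<m} g f) m m'' v = Ptens_act n g m' m'' (Ptens_act n f m m' v)"
proof
  fix k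
  have "Ptens_act n g m' m'' (Ptens_act n f m m' v) k =
     (\<Sum>h'\<in>{h' \<in> FA_hom n m'. compose {..<n} g h' = k}.
        sum v {h \<in> {h\<in>FA_hom n m. compose {..<n} g (compose {..<n} f h) = k}. compose {..<n} f h = h'})"
    unfolding Ptens_act_def by (intro sum.cong refl arg_cong2[where f=sum]) auto
  also have "\<dots> = sum v {h\<in>FA_hom n m. compose {..<n} g (compose {..<n} f h) = k}"
    by (rule sum.group) (auto intro: compose_in_FA_hom[OF f])
  also have "\<dots> = Ptens_act n (compose {..<m} g f) m m'' v k"
    unfolding Ptens_act_def
    by (intro arg_cong2[where f=sum] refl) (auto simp: compose_def fun_eq_iff FA_hom_def PiE_iff)
  finally show "Ptens_act n (compose {..<m} g f) m m'' v k = Ptens_act n g m' m'' (Ptens_act n f m m' v) k" ..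
qed

definition pushforward :: "(nat \<Rightarrow> nat) \<Rightarrow> nat \<Rightarrow> (nat \<Rightarrow> 'k::field) \<Rightarrow> nat \<Rightarrow> 'k" where
  "pushforward f m a = (\<lambda>y. \<Sum>x\<in>{x\<in>{..<m}. f x = y}. a x)"

lemma Ptens_act_pure_tensor:
  assumes f: "f \<in> FA_hom m m'"
  shows "Ptens_act n f m m' (pure_tensor n m a) = pure_tensor n m' (\<lambda>i. pushforward f m (a i))"
proof (rule ext)
  fix g'
  show "Ptens_act n f m m' (pure_tensor n m a) g' = pure_tensor n m' (\<lambda>i. pushforward f m (a i)) g'"
  proof (cases "g' \<in> FA_hom n m'")
    case False
    have e: "{g \<in> FA_hom n m. compose {..<n} f g = g'} = {}"
      using compose_in_FA_hom[OF f] False by auto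
    show ?thesis unfolding Ptens_act_def atLeast0LessThan e using False by (simp add: pure_tensor_def)
  next
    case True
    have eq: "{g \<in> FA_hom n m. compose {..<n} f g = g'} = PiE {..<n} (\<lambda>i. {x\<in>{..<m}. f x = g' i})"
    proof (intro set_eqI iffI)
      fix g assume "g \<in> {g \<in> FA_hom n m. compose {..<n} f g = g'}"
      then show "g \<in> PiE {..<n} (\<lambda>i. {x\<in>{..<m}. f x = g' i})"
        by (auto simp: FA_hom_def PiE_iff compose_def extensional_def)
    next
      fix g assume g: "g \<in> PiE {..<n} (\<lambda>i. {x\<in>{..<m}. f x = g' i})"
      have "compose {..<n} f g = g'"
        using g True by (auto simp: FA_hom_def PiE_iff compose_def extensional_def fun_eq_iff)
      then show "g \<in> {g \<in> FA_hom n m. compose {..<n} f g = g'}"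
        using g by (auto simp: FA_hom_def PiE_iff)
    qed
    have "Ptens_act n f m m' (pure_tensor n m a) g' = (\<Sum>g\<in>PiE {..<n} (\<lambda>i. {x\<in>{..<m}. f x = g' i}). \<Prod>i<n. a i (g i))"
      unfolding Ptens_act_def atLeast0LessThan eq
      by (intro sum.cong refl) (use eq in \<open>auto simp: pure_tensor_def\<close>)
    also have "\<dots> = (\<Prod>i<n. pushforward f m (a i) (g' i))"
      unfolding pushforward_def by (simp add: prod_sum_PiE)
    finally show ?thesis using True by (simp add: pure_tensor_def)
  qed
qed

lemma pushforward_in_Pbar1:
  assumes f: "f \<in> FA_hom m m'" and a: "a \<in> Pbar1 m"
  shows "pushforward f m a \<in> Pbar1 m'"
proof -
  have f_into: "\<And>x. x < m \<Longrightarrow> f x < m'"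
    using f by (auto simp: FA_hom_def)
  have "pushforward f m a y = 0" if "y \<ge> m'" for y
  proof -
    have empty: "{x\<in>{..<m}. f x = y} = {}"
      using f_into that by fastforce
    show ?thesis unfolding pushforward_def empty by simp
  qed
  moreover have "(\<Sum>y<m'. pushforward f m a y) = (\<Sum>x<m. a x)"
    unfolding pushforward_def by (rule sum.group) (use f_into in auto)
  ultimately show ?thesis using a by (simp add: Pbar1_def)
qed

lemma pushforward_id:
  assumes "a \<in> Pbar1 m"
  shows "pushforward (restrict id {..<m}) m a = a"
proof
  fix y
  have "{x\<in>{..<m}. restrict id {..<m} x = y} = (if y < m then {y} else {})" by auto
  then show "pushforward (restrict id {..<m}) m a y = a y"
    using assms by (simp add: pushforward_def Pbar1_def)
qed

lemma pure_tensor_cong: "(\<And>i. i < n \<Longrightarrow> a i = b i) \<Longrightarrow> pure_tensor n m a = pure_tensor n m b"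
  unfolding pure_tensor_def by (intro ext if_cong refl prod.cong) auto

lemma Pbar_tensor_subspace: "Ptens.subspace (Pbar_tensor n m)"
  by (simp add: Pbar_tensor_def)

lemma zero_in_Pbar_tensor [simp]: "0 \<in> Pbar_tensor n m"
  using Ptens.subspace_0[OF Pbar_tensor_subspace] .

lemma pure_tensor_in_Pbar_tensor:
  "0 < m \<Longrightarrow> \<forall>i<n. a i \<in> Pbar1 m \<Longrightarrow> pure_tensor n m a \<in> Pbar_tensor n m"
  by (auto simp: Pbar_tensor_def intro!: Ptens.span_base)

lemma Pbar_tensor_induct [consumes 2, case_names zero step]:
  assumes "v \<in> Pbar_tensor n m" and "0 < m"
    and "P 0"
    and "\<And>c a w. \<forall>i<n. a i \<in> Pbar1 m \<Longrightarrow> P w \<Longrightarrow> P (Ptens_sc c (pure_tensor n m a) + w)"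
  shows "P v"
proof -
  have "v \<in> Ptens.span {pure_tensor n m a | a. \<forall>i<n. a i \<in> Pbar1 m}"
    using assms(1,2) by (simp add: Pbar_tensor_def)
  then show ?thesis
  proof (induction rule: Ptens.span_induct_alt)
    case base
    show ?case by (rule assms(3))
  next
    case (step c x y)
    then obtain a where x: "x = pure_tensor n m a" "\<forall>i<n. a i \<in> Pbar1 m" by blast
    show ?case unfolding x(1) by (rule assms(4)[OF x(2) step.IH])
  qed
qed

lemma Pbar_tensor_closed:
  assumes f: "f \<in> FA_hom m m'" and v: "v \<in> Pbar_tensor n m"
  shows "Ptens_act n f m m' v \<in> Pbar_tensor n m'"
proof (cases "m = 0")
  case True
  then have "v = 0" using v by (simp add: Pbar_tensor_def)
  then show ?thesis by simp
next
  case False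
  then have m: "0 < m" and m': "0 < m'" using FA_hom_target_pos[OF f] by auto
  from v m show ?thesis
  proof (induction rule: Pbar_tensor_induct)
    case zero
    show ?case by (simp only: Ptens_act_zero zero_in_Pbar_tensor)
  next
    case (step c a w)
    have "Ptens_act n f m m' (pure_tensor n m a) \<in> Pbar_tensor n m'"
      unfolding Ptens_act_pure_tensor[OF f]
      by (rule pure_tensor_in_Pbar_tensor[OF m']) (use step.hyps pushforward_in_Pbar1[OF f] in blast)
    then show ?case
      unfolding Ptens_act_add Ptens_act_scale
      by (intro Ptens.subspace_add[OF Pbar_tensor_subspace] Ptens.subspace_scale[OF Pbar_tensor_subspace] step.IH)
  qed
qed

lemma Ptens_act_id:
  assumes v: "v \<in> Pbar_tensor n m"
  shows "Ptens_act n (restrict id {..<m}) m m v = v"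
proof (cases "m = 0")
  case True
  then show ?thesis using v by (simp add: Pbar_tensor_def)
next
  case False
  have idhom: "restrict id {..<m} \<in> FA_hom m m" by (simp add: FA_hom_def)
  from v False[unfolded neq0_conv] show ?thesis
  proof (induction rule: Pbar_tensor_induct)
    case (step c a w)
    have "Ptens_act n (restrict id {..<m}) m m (pure_tensor n m a) = pure_tensor n m a"
      unfolding Ptens_act_pure_tensor[OF idhom] using step.hyps
      by (intro pure_tensor_cong) (simp add: pushforward_id)
    then show ?case by (simp only: Ptens_act_add Ptens_act_scale step.IH)
  qed (rule Ptens_act_zero)
qed

lemma FA_module_Pbar_tensor: "FA_module Ptens_sc (Pbar_tensor n) (Ptens_act n)"
  unfolding FA_module_def
  by (simp add: Ptens.vector_space_axioms Pbar_tensor_subspace Pbar_tensor_closed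
      Ptens_act_add Ptens_act_scale Ptens_act_id Ptens_act_compose)

section \<open>Modules over kFA\<close>

lemma nat_trans_zero:
  assumes "FA_nat_trans sc' N actN sc V act \<phi>" and "0 \<in> N m"
  shows "\<phi> m 0 = (0::'w::ab_group_add)"
proof -
  have "\<phi> m 0 = \<phi> m 0 + \<phi> m 0"
    using assms unfolding FA_nat_trans_def by (metis add.right_neutral)
  then show ?thesis by simp
qed

lemma nat_trans_sum:
  assumes \<phi>: "FA_nat_trans sc' N actN sc V act \<phi>" and N: "module.subspace sc' (N m)" "module sc'"
    and u: "\<And>i. i \<in> I \<Longrightarrow> u i \<in> N m"
  shows "\<phi> m (sum u I) = (\<Sum>i\<in>I. (\<phi> m (u i) :: 'w::ab_group_add))"
  using u
proof (induction I rule: infinite_finite_induct)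
  case (insert i I)
  have "sum u I \<in> N m" using insert module.subspace_sum[OF N(2,1)] by blast
  then show ?case
    using insert \<phi> unfolding FA_nat_trans_def by simp
qed (use nat_trans_zero[OF \<phi>] module.subspace_0[OF N(2,1)] in simp_all)

locale FA_mod =
  fixes sc :: "'k::field \<Rightarrow> 'v::ab_group_add \<Rightarrow> 'v"
    and V :: "nat \<Rightarrow> 'v set"
    and act :: "(nat \<Rightarrow> nat) \<Rightarrow> nat \<Rightarrow> nat \<Rightarrow> 'v \<Rightarrow> 'v"
  assumes FA_module: "FA_module sc V act"
begin

sublocale vector_space sc
  using FA_module by (simp add: FA_module_def)

lemma subspace_V: "subspace (V m)"
  using FA_module by (simp add: FA_module_def)

lemma act_in: "f \<in> FA_hom m m' \<Longrightarrow> x \<in> V m \<Longrightarrow> act f m m' x \<in> V m'"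
  using FA_module by (simp add: FA_module_def)

lemma act_add:
  "f \<in> FA_hom m m' \<Longrightarrow> x \<in> V m \<Longrightarrow> y \<in> V m \<Longrightarrow> act f m m' (x + y) = act f m m' x + act f m m' y"
  using FA_module by (simp add: FA_module_def)

lemma act_scale: "f \<in> FA_hom m m' \<Longrightarrow> x \<in> V m \<Longrightarrow> act f m m' (sc c x) = sc c (act f m m' x)"
  using FA_module by (simp add: FA_module_def)

lemma act_id: "x \<in> V m \<Longrightarrow> act (restrict id {..<m}) m m x = x"
  using FA_module by (simp add: FA_module_def)

lemma act_compose:
  "f \<in> FA_hom m m' \<Longrightarrow> g \<in> FA_hom m' m'' \<Longrightarrow> x \<in> V m \<Longrightarrow>
   act (compose {..<m} g f) m m'' x = act g m' m'' (act f m m' x)"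
  using FA_module by (simp add: FA_module_def)

lemma zero_in_V [simp]: "0 \<in> V m"
  using subspace_V subspace_0 by blast

lemma scale_in_V: "x \<in> V m \<Longrightarrow> sc c x \<in> V m"
  using subspace_V subspace_scale by blast

lemma sum_in_V: "(\<And>i. i \<in> I \<Longrightarrow> h i \<in> V m) \<Longrightarrow> sum h I \<in> V m"
  using subspace_V subspace_sum by blast

lemma act_zero: "f \<in> FA_hom m m' \<Longrightarrow> act f m m' 0 = 0"
  using act_add[of f m m' 0 0] by simp

lemma act_sum:
  "f \<in> FA_hom m m' \<Longrightarrow> (\<And>i. i \<in> I \<Longrightarrow> h i \<in> V m) \<Longrightarrow>
   act f m m' (sum h I) = (\<Sum>i\<in>I. act f m m' (h i))"
proof (induction I rule: infinite_finite_induct)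
  case (insert i I)
  then show ?case by (simp add: act_add sum_in_V)
qed (simp_all add: act_zero)

lemma nonzero_submodule_eq:
  assumes "FA_simple sc V act" and "FA_submodule sc V act W" and "W m \<noteq> {0}"
  shows "W = V"
  using assms unfolding FA_simple_def by blast

lemma nat_trans_image_submodule:
  assumes M: "FA_module sc' M actM" and \<phi>: "FA_nat_trans sc' M actM sc V act \<phi>"
  shows "FA_submodule sc V act (\<lambda>m. \<phi> m ` M m)"
proof -
  interpret M: vector_space sc' using M by (simp add: FA_module_def)
  have Msub: "M.subspace (M m)" for m using M by (simp add: FA_module_def)
  have Mact: "actM f m m' u \<in> M m'" if "f \<in> FA_hom m m'" "u \<in> M m" for f m m' u
    using M that by (simp add: FA_module_def)
  have \<phi>in: "\<And>m u. u \<in> M m \<Longrightarrow> \<phi> m u \<in> V m"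
    and \<phi>add: "\<And>m u w. u \<in> M m \<Longrightarrow> w \<in> M m \<Longrightarrow> \<phi> m (u + w) = \<phi> m u + \<phi> m w"
    and \<phi>scale: "\<And>m c u. u \<in> M m \<Longrightarrow> \<phi> m (sc' c u) = sc c (\<phi> m u)"
    and \<phi>nat: "\<And>m m' f u. f \<in> FA_hom m m' \<Longrightarrow> u \<in> M m \<Longrightarrow> \<phi> m' (actM f m m' u) = act f m m' (\<phi> m u)"
    using \<phi> unfolding FA_nat_trans_def by blast+
  have "subspace (\<phi> m ` M m)" for m
  proof (rule subspaceI)
    have zero: "0 \<in> M m" by (rule M.subspace_0[OF Msub])
    then show "0 \<in> \<phi> m ` M m"
      using nat_trans_zero[OF \<phi> zero] by (metis image_eqI)
  next
    fix u w assume "u \<in> \<phi> m ` M m" "w \<in> \<phi> m ` M m"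
    then show "u + w \<in> \<phi> m ` M m"
      using \<phi>add M.subspace_add[OF Msub] by (auto simp flip: \<phi>add)
  next
    fix c u assume "u \<in> \<phi> m ` M m"
    then show "sc c u \<in> \<phi> m ` M m"
      using M.subspace_scale[OF Msub] by (auto simp flip: \<phi>scale)
  qed
  moreover have "act f m m' u \<in> \<phi> m' ` M m'" if "f \<in> FA_hom m m'" "u \<in> \<phi> m ` M m" for f m m' u
    using that Mact by (auto simp flip: \<phi>nat)
  ultimately show ?thesis
    using \<phi>in unfolding FA_submodule_def by blast
qed

lemma quotient_of_nonzero_nat_trans:
  assumes "FA_simple sc V act" and M: "FA_module sc' M actM"
    and \<phi>: "FA_nat_trans sc' M actM sc V act \<phi>" and "u \<in> M m" and "\<phi> m u \<noteq> 0"
  shows "FA_quotient_of sc' M actM sc V act"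
proof -
  have "(\<lambda>m. \<phi> m ` M m) = V"
    using assms by (intro nonzero_submodule_eq nat_trans_image_submodule[OF M \<phi>]) auto
  then show ?thesis
    unfolding FA_quotient_of_def using \<phi> by metis
qed

end

section \<open>Simple modules that do not vanish on the empty set\<close>

context FA_mod
begin

lemma submodule_off_empty: "FA_submodule sc V act (\<lambda>X. if X = 0 then {0} else V X)"
  unfolding FA_submodule_def
proof (intro conjI allI impI ballI)
  fix X
  show "(if X = 0 then {0} else V X) \<subseteq> V X" by simp
  show "subspace (if X = 0 then {0} else V X)" using subspace_V by simp
next
  fix X X' f u assume f: "f \<in> FA_hom X X'" and u: "u \<in> (if X = 0 then {0} else V X)"
  then show "act f X X' u \<in> (if X' = 0 then {0} else V X')"
    using act_zero[OF f] act_in[OF f] FA_hom_target_pos[OF f] by (cases "X = 0") auto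
qed

lemma simple_vanishes_off_empty:
  assumes simple: "FA_simple sc V act" and V0: "V 0 \<noteq> {0}" and X: "X \<noteq> 0"
  shows "V X = {0}"
proof -
  have "(\<lambda>X. if X = 0 then {0} else V X) \<noteq> V"
    using V0 fun_cong[of "\<lambda>X. if X = 0 then {0} else V X" V 0] by auto
  then have "\<forall>X. (if X = 0 then {0} else V X) = {0}"
    using simple submodule_off_empty unfolding FA_simple_def by blast
  then have "(if X = 0 then {0} else V X) = {0}" by blast
  then show ?thesis using X by simp
qed

lemma simple_value_at_empty:
  assumes simple: "FA_simple sc V act" and e: "e \<in> V 0" "e \<noteq> 0"
  shows "V 0 = range (\<lambda>c. sc c e)"
proof -
  have V0: "V 0 \<noteq> {0}" using e by blast
  define U where "U X = (if X = 0 then span {e} else {0})" for X :: nat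
  have "FA_submodule sc V act U"
    unfolding FA_submodule_def
  proof (intro conjI allI impI ballI)
    fix X
    show "U X \<subseteq> V X"
      using span_minimal[of "{e}" "V 0"] e subspace_V by (auto simp: U_def)
    show "subspace (U X)" by (simp add: U_def)
  next
    fix X X' f u assume f: "f \<in> FA_hom X X'" and u: "u \<in> U X"
    show "act f X X' u \<in> U X'"
    proof (cases "X = 0")
      case True
      then have uV: "u \<in> V 0"
        using u span_minimal[of "{e}" "V 0"] e subspace_V by (auto simp: U_def)
      show ?thesis
      proof (cases "X' = 0")
        case True
        then show ?thesis using \<open>X = 0\<close> f u act_id[OF uV] FA_hom_zero_zero[of f] by (auto simp: U_def)
      next
        case False
        then show ?thesis
          using act_in[OF f] uV \<open>X = 0\<close> simple_vanishes_off_empty[OF simple V0] by (auto simp: U_def)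
      qed
    next
      case False
      then show ?thesis using u act_zero[OF f] by (simp add: U_def span_zero)
    qed
  qed
  moreover have "U 0 \<noteq> {0}" using e span_base[of e "{e}"] by (auto simp: U_def)
  ultimately have "U = V" by (rule nonzero_submodule_eq[OF simple])
  then have "V 0 = span {e}" using U_def[of 0] by simp
  then show ?thesis by (simp add: span_singleton)
qed

lemma iso_K0_if_line_at_empty:
  assumes e: "e \<noteq> 0" and V0e: "V 0 = range (\<lambda>c. sc c e)" and Vpos: "\<And>X. X \<noteq> 0 \<Longrightarrow> V X = {0}"
  shows "FA_iso sc V act ((*) :: 'k \<Rightarrow> 'k \<Rightarrow> 'k) K0_val K0_act"
proof -
  define \<phi> where "\<phi> X u = (if X = 0 then (THE c. u = sc c e) else (0::'k))" for X :: nat and u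
  have \<phi>0: "\<phi> 0 (sc d e) = d" for d
    using e by (auto simp: \<phi>_def intro!: the_equality)
  have "FA_nat_trans sc V act (*) K0_val K0_act \<phi>"
    unfolding FA_nat_trans_def
  proof (intro conjI allI ballI impI)
    fix X u show "\<phi> X u \<in> K0_val X" by (simp add: \<phi>_def K0_val_def)
  next
    fix X u w assume "u \<in> V X" "w \<in> V X"
    then show "\<phi> X (u + w) = \<phi> X u + \<phi> X w"
      using V0e \<phi>0 by (cases "X = 0") (auto simp: \<phi>_def scale_left_distrib[symmetric])
  next
    fix X c u assume "u \<in> V X"
    then show "\<phi> X (sc c u) = c * \<phi> X u"
      using V0e \<phi>0 by (cases "X = 0") (auto simp: \<phi>_def)
  next
    fix X X' f u assume f: "f \<in> FA_hom X X'" and u: "u \<in> V X"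
    show "\<phi> X' (act f X X' u) = K0_act f X X' (\<phi> X u)"
    proof (cases "X = 0 \<and> X' = 0")
      case True
      then show ?thesis using FA_hom_zero_zero[of f] f act_id[of u 0] u by (simp add: K0_act_def)
    next
      case False
      then have "X' \<noteq> 0" using FA_hom_target_pos[OF f] by auto
      then show ?thesis using False by (auto simp: K0_act_def \<phi>_def)
    qed
  qed
  moreover have "bij_betw (\<phi> X) (V X) (K0_val X)" for X
  proof (cases "X = 0")
    case True
    show ?thesis unfolding True V0e K0_val_def
      by (rule bij_betw_byWitness[where f'="\<lambda>c. sc c e"]) (auto simp: \<phi>0)
  next
    case False
    then show ?thesis using Vpos[OF False] by (simp add: K0_val_def \<phi>_def bij_betw_def)
  qed
  ultimately show ?thesis unfolding FA_iso_def by blast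
qed

lemma simple_iso_K0:
  assumes simple: "FA_simple sc V act" and V0: "V 0 \<noteq> {0}"
  shows "FA_iso sc V act ((*) :: 'k \<Rightarrow> 'k \<Rightarrow> 'k) K0_val K0_act"
proof -
  obtain e where e: "e \<in> V 0" "e \<noteq> 0" using V0 zero_in_V by blast
  show ?thesis
    using iso_K0_if_line_at_empty[OF e(2) simple_value_at_empty[OF simple e]]
      simple_vanishes_off_empty[OF simple V0] by blast
qed

end

section \<open>Composition factors of Pbar^{\<otimes>t}\<close>

lemma sum_fun_apply: "(sum f A) x = (\<Sum>a\<in>A. f a x)"
  by (induction A rule: infinite_finite_induct) auto

(* For y \<noteq> 0, delta y is the element [y] - [0] of Pbar. *)
definition delta :: "nat \<Rightarrow> nat \<Rightarrow> 'k::field" where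
  "delta y = (\<lambda>z. if z = y then 1 else if z = 0 then -1 else 0)"

definition collapse :: "nat \<Rightarrow> nat set \<Rightarrow> nat \<Rightarrow> nat" where
  "collapse m W = restrict (\<lambda>z. if z \<in> W then z else 0) {..<m}"

lemma collapse_in_FA_hom: "0 < m \<Longrightarrow> W \<subseteq> {1..<m} \<Longrightarrow> collapse m W \<in> FA_hom m m"
  unfolding collapse_def FA_hom_def by (auto simp: PiE_iff)

lemma Pbar1_delta_expansion:
  assumes a: "a \<in> Pbar1 m" and m: "0 < m"
  shows "a = (\<lambda>z. \<Sum>y\<in>{1..<m}. a y * delta y z)"
proof
  fix z
  have "(\<Sum>x<m. a x) = a 0 + (\<Sum>y\<in>{1..<m}. a y)"
    using sum.atLeast_Suc_lessThan[OF m, of a] by (simp add: atLeast0LessThan[symmetric] del: atLeast0LessThan)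
  then have a0: "a 0 = - (\<Sum>y\<in>{1..<m}. a y)"
    using a by (simp add: Pbar1_def eq_neg_iff_add_eq_0)
  consider "z = 0" | "z \<in> {1..<m}" | "z \<ge> m"
    by fastforce
  then show "a z = (\<Sum>y\<in>{1..<m}. a y * delta y z)"
  proof cases
    case 1
    then show ?thesis using a0 by (simp add: delta_def sum_negf)
  next
    case 2
    then have "(\<Sum>y\<in>{1..<m}. a y * delta y z) = (\<Sum>y\<in>{1..<m}. if y = z then a y else 0)"
      by (intro sum.cong) (auto simp: delta_def)
    then show ?thesis using 2 by simp
  next
    case 3
    then show ?thesis using a by (auto simp: delta_def Pbar1_def intro!: sum.neutral)
  qed
qed

lemma pure_tensor_delta_expansion:
  assumes m: "0 < m" and a: "\<forall>i<t. a i \<in> Pbar1 m"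
  shows "pure_tensor t m a =
    (\<Sum>ys\<in>PiE {..<t} (\<lambda>_. {1..<m}). Ptens_sc (\<Prod>i<t. a i (ys i)) (pure_tensor t m (\<lambda>i. delta (ys i))))"
proof
  fix g
  have "a i z = (\<Sum>y\<in>{1..<m}. a i y * delta y z)" if "i < t" for i z
    by (rule fun_cong[OF Pbar1_delta_expansion[OF a[rule_format, OF that] m]])
  then have "(\<Prod>i<t. a i (g i)) = (\<Prod>i<t. \<Sum>y\<in>{1..<m}. a i y * delta y (g i))"
    by (intro prod.cong refl) simp
  also have "\<dots> = (\<Sum>ys\<in>PiE {..<t} (\<lambda>_. {1..<m}). \<Prod>i<t. a i (ys i) * delta (ys i) (g i))"
    by (rule prod_sum_PiE) simp_all
  finally show "pure_tensor t m a g = (\<Sum>ys\<in>PiE {..<t} (\<lambda>_. {1..<m}).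
      Ptens_sc (\<Prod>i<t. a i (ys i)) (pure_tensor t m (\<lambda>i. delta (ys i)))) g"
    by (simp add: sum_fun_apply Ptens_sc_def pure_tensor_def prod.distrib)
qed

lemma pushforward_collapse_delta:
  assumes W: "W \<subseteq> {1..<m}" and y: "y \<in> {1..<m}"
  shows "pushforward (collapse m W) m (delta y) = (if y \<in> W then delta y else (0 :: nat \<Rightarrow> 'k::field))"
proof
  fix z
  have "0 \<notin> W" using W by auto
  consider "z \<in> W" | "z = 0" | "z \<notin> W" "z \<noteq> 0" by blast
  then show "pushforward (collapse m W) m (delta y) z = (if y \<in> W then delta y else (0 :: nat \<Rightarrow> 'k)) z"
  proof cases
    case 1
    then have fibre: "{x\<in>{..<m}. collapse m W x = z} = {z}" using W by (auto simp: collapse_def)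
    show ?thesis unfolding pushforward_def fibre using 1 \<open>0 \<notin> W\<close> by (auto simp: delta_def)
  next
    case 2
    then have fibre: "{x\<in>{..<m}. collapse m W x = z} = {..<m} - W" using W by (auto simp: collapse_def)
    have "(\<Sum>x\<in>{..<m} - W. delta y x) = (\<Sum>x\<in>{..<m} - W. (if x = y then 1 else 0) - (if x = 0 then 1 else 0) :: 'k)"
      using y by (intro sum.cong) (auto simp: delta_def)
    also have "\<dots> = (if y \<in> W then -1 else 0)"
      using y \<open>0 \<notin> W\<close> by (simp add: sum_subtractf)
    finally have "(\<Sum>x\<in>{..<m} - W. delta y x) = (if y \<in> W then -1 else (0::'k))" .
    then show ?thesis unfolding pushforward_def fibre using 2 y by (simp add: delta_def)
  next
    case 3
    then have fibre: "{x\<in>{..<m}. collapse m W x = z} = {}" by (auto simp: collapse_def)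
    show ?thesis unfolding pushforward_def fibre using 3 by (auto simp: delta_def)
  qed
qed

lemma pure_tensor_zero_factor: "i < n \<Longrightarrow> a i = 0 \<Longrightarrow> pure_tensor n m a = 0"
  unfolding pure_tensor_def by (auto simp: fun_eq_iff intro!: prod_zero bexI[of _ i])

lemma Ptens_act_collapse_delta_tensor:
  assumes m: "0 < m" and W: "W \<subseteq> {1..<m}" and ys: "ys ` {..<t} \<subseteq> {1..<m}"
  shows "Ptens_act t (collapse m W) m m (pure_tensor t m (\<lambda>i. delta (ys i))) =
    (if ys ` {..<t} \<subseteq> W then pure_tensor t m (\<lambda>i. delta (ys i)) else 0)"
proof (cases "ys ` {..<t} \<subseteq> W")
  case True
  have "pure_tensor t m (\<lambda>i. pushforward (collapse m W) m (delta (ys i))) = pure_tensor t m (\<lambda>i. delta (ys i))"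
  proof (rule pure_tensor_cong)
    fix i assume "i < t"
    then have "ys i \<in> W" "ys i \<in> {1..<m}" using True ys by auto
    then show "pushforward (collapse m W) m (delta (ys i)) = delta (ys i)"
      by (simp add: pushforward_collapse_delta[OF W])
  qed
  then show ?thesis using True by (simp add: Ptens_act_pure_tensor[OF collapse_in_FA_hom[OF m W]])
next
  case False
  then obtain i where "i < t" "ys i \<notin> W" by auto
  then show ?thesis using W ys
    by (auto simp: Ptens_act_pure_tensor[OF collapse_in_FA_hom[OF m W]] pushforward_collapse_delta
        intro!: pure_tensor_zero_factor[of i])
qed

lemma alternating_sum_supersets:
  assumes "finite Z"
  shows "(\<Sum>W\<in>Pow Z. (-1) ^ (card Z - card W) * (if I \<subseteq> W then 1 else 0)) = (if Z = I then 1 else (0::'a::comm_ring_1))"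
  using inclusion_exclusion_mobius[of "\<lambda>W. if I \<subseteq> W then 1 else 0" "\<lambda>W. if W = I then 1 else 0", OF _ assms]
  by (simp add: eq_commute)

definition small_subsets :: "nat \<Rightarrow> nat \<Rightarrow> nat set set" where
  "small_subsets m t = {Z. Z \<subseteq> {1..<m} \<and> card Z \<le> t}"

lemma finite_small_subsets [simp]: "finite (small_subsets m t)"
  unfolding small_subsets_def by (rule finite_subset[of _ "Pow {1..<m}"]) auto

lemma finite_small_subset: "Z \<in> small_subsets m t \<Longrightarrow> finite Z"
  unfolding small_subsets_def using finite_subset[of Z "{1..<m}"] by auto

lemma subset_small_subset:
  assumes "Z \<in> small_subsets m t" and "W \<subseteq> Z"
  shows "W \<subseteq> {1..<m}" and "card W \<le> t"
  using assms finite_small_subset[OF assms(1)] card_mono[of Z W] by (auto simp: small_subsets_def)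

(* By inclusion-exclusion this is the identity on Pbar^{\<otimes>t}(m) (collapse_sum_Pbar_tensor),
   while every collapse m W occurring in it factors through t+1 (collapse_factors_through). *)
definition collapse_sum :: "nat \<Rightarrow> nat \<Rightarrow> ((nat \<Rightarrow> nat) \<Rightarrow> 'k::field) \<Rightarrow> (nat \<Rightarrow> nat) \<Rightarrow> 'k" where
  "collapse_sum m t v = (\<Sum>Z\<in>small_subsets m t. \<Sum>W\<in>Pow Z.
     Ptens_sc ((-1) ^ (card Z - card W)) (Ptens_act t (collapse m W) m m v))"

lemma collapse_sum_linear:
  "collapse_sum m t (Ptens_sc c x + y) = Ptens_sc c (collapse_sum m t x) + collapse_sum m t y"
  unfolding collapse_sum_def Ptens_act_add Ptens_act_scale Ptens.scale_right_distrib sum.distrib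
    Ptens.scale_sum_right
  by (simp add: Ptens.scale_left_commute mult.commute)

lemma collapse_sum_delta_tensor:
  assumes m: "0 < m" and ys: "ys ` {..<t} \<subseteq> {1..<m}"
  shows "collapse_sum m t (pure_tensor t m (\<lambda>i. delta (ys i))) =
    (pure_tensor t m (\<lambda>i. delta (ys i)) :: (nat \<Rightarrow> nat) \<Rightarrow> 'k::field)"
    (is "_ = ?d")
proof -
  let ?I = "ys ` {..<t}"
  have I: "?I \<in> small_subsets m t"
    using ys card_image_le[of "{..<t}" ys] by (simp add: small_subsets_def)
  have "collapse_sum m t ?d = (\<Sum>Z\<in>small_subsets m t. \<Sum>W\<in>Pow Z.
      Ptens_sc ((-1) ^ (card Z - card W) * (if ?I \<subseteq> W then 1 else 0)) ?d)"
    unfolding collapse_sum_def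
  proof (intro sum.cong refl)
    fix Z W assume "Z \<in> small_subsets m t" "W \<in> Pow Z"
    then have "W \<subseteq> {1..<m}" by (auto simp: small_subsets_def)
    then show "Ptens_sc ((-1) ^ (card Z - card W)) (Ptens_act t (collapse m W) m m ?d) =
        Ptens_sc ((-1) ^ (card Z - card W) * (if ?I \<subseteq> W then 1 else 0)) ?d"
      by (simp add: Ptens_act_collapse_delta_tensor[OF m _ ys] Ptens_sc_def fun_eq_iff)
  qed
  also have "\<dots> = Ptens_sc (\<Sum>Z\<in>small_subsets m t. \<Sum>W\<in>Pow Z.
      (-1) ^ (card Z - card W) * (if ?I \<subseteq> W then 1 else 0)) ?d"
    by (simp add: Ptens.scale_sum_left)
  also have "(\<Sum>Z\<in>small_subsets m t. \<Sum>W\<in>Pow Z. (-1) ^ (card Z - card W) * (if ?I \<subseteq> W then 1 else 0))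
      = (\<Sum>Z\<in>small_subsets m t. if Z = ?I then 1 else (0::'k))"
    by (intro sum.cong refl alternating_sum_supersets) (simp add: finite_small_subset)
  also have "\<dots> = 1" using I by simp
  finally show ?thesis by simp
qed

lemma collapse_sum_Pbar_tensor:
  fixes v :: "(nat \<Rightarrow> nat) \<Rightarrow> 'k::field"
  assumes m: "0 < m" and v: "v \<in> Pbar_tensor t m"
  shows "collapse_sum m t v = v"
proof -
  define D :: "((nat \<Rightarrow> nat) \<Rightarrow> 'k) set" where
    "D = {pure_tensor t m (\<lambda>i. delta (ys i)) | ys. ys \<in> PiE {..<t} (\<lambda>_. {1..<m})}"
  have pure_in_span: "pure_tensor t m a \<in> Ptens.span D" if "\<forall>i<t. a i \<in> Pbar1 m" for a
    unfolding pure_tensor_delta_expansion[OF m that] D_def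
    by (intro Ptens.span_sum Ptens.span_scale Ptens.span_base) blast
  have "Pbar_tensor t m = Ptens.span {pure_tensor t m a | a. \<forall>i<t. a i \<in> Pbar1 m}"
    using m by (simp add: Pbar_tensor_def)
  also have "\<dots> \<subseteq> Ptens.span D"
    by (rule Ptens.span_minimal) (use pure_in_span in auto)
  finally have "Pbar_tensor t m \<subseteq> Ptens.span D" .
  with v have "v \<in> Ptens.span D" by blast
  then show ?thesis
  proof (induction rule: Ptens.span_induct_alt)
    case base
    show ?case unfolding collapse_sum_def Ptens_act_zero Ptens.scale_zero_right by simp
  next
    case (step c x y)
    then obtain ys where ys: "ys \<in> PiE {..<t} (\<lambda>_. {1..<m})" and x: "x = pure_tensor t m (\<lambda>i. delta (ys i))"
      unfolding D_def by blast
    from ys have "ys ` {..<t} \<subseteq> {1..<m}" by (auto simp: PiE_def Pi_def)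
    then have "collapse_sum m t x = x"
      unfolding x by (rule collapse_sum_delta_tensor[OF m])
    then show ?case by (simp only: collapse_sum_linear step.IH)
  qed
qed

lemma FA_hom_factor_through:
  assumes f: "f \<in> FA_hom m m'" and A: "f ` {..<m} \<subseteq> A" "A \<subseteq> {..<m'}"
    and card: "card A \<le> k" and m': "0 < m'"
  shows "\<exists>h g. h \<in> FA_hom m k \<and> g \<in> FA_hom k m' \<and> compose {..<m} g h = f"
proof -
  have "finite A" using A(2) finite_subset by blast
  then obtain \<iota> where \<iota>: "\<iota> ` A \<subseteq> {..<k}" "inj_on \<iota> A"
    using card_le_inj[of A "{..<k}"] card by auto
  define h where "h = restrict (\<lambda>x. \<iota> (f x)) {..<m}"
  define g where "g = restrict (\<lambda>j. if j \<in> \<iota> ` A then the_inv_into A \<iota> j else 0) {..<k}"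
  have "h \<in> FA_hom m k" using A \<iota> by (auto simp: h_def FA_hom_def PiE_iff)
  moreover have "g \<in> FA_hom k m'"
    unfolding g_def FA_hom_def using the_inv_into_into[OF \<iota>(2) _ A(2)] m' by (auto simp: PiE_iff)
  moreover have "compose {..<m} g h = f"
  proof
    fix x
    show "compose {..<m} g h x = f x"
    proof (cases "x < m")
      case True
      then have "f x \<in> A" using A by auto
      then show ?thesis using True \<iota> by (simp add: compose_def h_def g_def the_inv_into_f_f subset_eq)
    next
      case False
      then show ?thesis using f by (auto simp: compose_def FA_hom_def PiE_iff extensional_def)
    qed
  qed
  ultimately show ?thesis by blast
qed

lemma collapse_factors_through:
  assumes m: "0 < m" and W: "W \<subseteq> {1..<m}" "card W \<le> t"
  shows "\<exists>h g. h \<in> FA_hom m (Suc t) \<and> g \<in> FA_hom (Suc t) m \<and> compose {..<m} g h = collapse m W"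
proof (rule FA_hom_factor_through[OF collapse_in_FA_hom[OF m W(1)]])
  have "finite W" using W(1) finite_subset by blast
  then show "card (insert 0 W) \<le> Suc t" using W(2) by (simp add: card_insert_if)
  show "collapse m W ` {..<m} \<subseteq> insert 0 W" by (auto simp: collapse_def)
qed (use m W in auto)

context FA_mod
begin

lemma nat_trans_kills_collapse:
  assumes N: "FA_submodule Ptens_sc (Pbar_tensor t) (Ptens_act t) N"
    and \<phi>: "FA_nat_trans Ptens_sc N (Ptens_act t) sc V act \<phi>" and V0: "V (Suc t) = {0}"
    and m: "0 < m" and W: "W \<subseteq> {1..<m}" "card W \<le> t" and v: "v \<in> N m"
  shows "\<phi> m (Ptens_act t (collapse m W) m m v) = 0"
proof -
  obtain h g where hg: "h \<in> FA_hom m (Suc t)" "g \<in> FA_hom (Suc t) m" "compose {..<m} g h = collapse m W"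
    using collapse_factors_through[OF m W] by blast
  have u: "Ptens_act t h m (Suc t) v \<in> N (Suc t)"
    using N hg(1) v by (simp add: FA_submodule_def)
  have "\<phi> m (Ptens_act t (collapse m W) m m v) = \<phi> m (Ptens_act t g (Suc t) m (Ptens_act t h m (Suc t) v))"
    by (metis Ptens_act_compose[OF hg(1,2)] hg(3))
  also have "\<dots> = act g (Suc t) m (\<phi> (Suc t) (Ptens_act t h m (Suc t) v))"
    using \<phi> hg(2) u by (simp add: FA_nat_trans_def)
  also have "\<dots> = 0"
  proof -
    have "\<phi> (Suc t) (Ptens_act t h m (Suc t) v) \<in> V (Suc t)"
      using \<phi> u unfolding FA_nat_trans_def by blast
    then show ?thesis using V0 act_zero[OF hg(2)] by simp
  qed
  finally show ?thesis .
qed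

lemma nat_trans_from_Pbar_tensor_zero:
  assumes N: "FA_submodule Ptens_sc (Pbar_tensor t) (Ptens_act t) N"
    and \<phi>: "FA_nat_trans Ptens_sc N (Ptens_act t) sc V act \<phi>" and V0: "V (Suc t) = {0}"
    and v: "v \<in> N m"
  shows "\<phi> m v = 0"
proof -
  have Nsub: "Ptens.subspace (N m)" and vP: "v \<in> Pbar_tensor t m"
    using N v by (auto simp: FA_submodule_def)
  have \<phi>0: "\<phi> m 0 = 0"
    by (rule nat_trans_zero[OF \<phi> Ptens.subspace_0[OF Nsub]])
  show ?thesis
  proof (cases "m = 0")
    case True
    then have "v = 0" using vP by (simp add: Pbar_tensor_def)
    then show ?thesis using \<phi>0 by simp
  next
    case False
    then have m: "0 < m" by simp
    have term_in_N: "Ptens_sc c (Ptens_act t (collapse m W) m m v) \<in> N m"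
      if "Z \<in> small_subsets m t" "W \<in> Pow Z" for Z W c
      using N v collapse_in_FA_hom[OF m subset_small_subset(1)[OF that(1)]] that(2)
      by (intro Ptens.subspace_scale[OF Nsub]) (auto simp: FA_submodule_def)
    have "\<phi> m v = \<phi> m (collapse_sum m t v)"
      by (simp add: collapse_sum_Pbar_tensor[OF m vP])
    also have "\<dots> = (\<Sum>Z\<in>small_subsets m t. \<phi> m (\<Sum>W\<in>Pow Z.
        Ptens_sc ((-1) ^ (card Z - card W)) (Ptens_act t (collapse m W) m m v)))"
      unfolding collapse_sum_def
      by (rule nat_trans_sum[OF \<phi> Nsub Ptens.module_axioms])
        (rule Ptens.subspace_sum[OF Nsub] term_in_N | assumption)+
    also have "\<dots> = (\<Sum>Z\<in>small_subsets m t. \<Sum>W\<in>Pow Z.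
        \<phi> m (Ptens_sc ((-1) ^ (card Z - card W)) (Ptens_act t (collapse m W) m m v)))"
      by (intro sum.cong refl nat_trans_sum[OF \<phi> Nsub Ptens.module_axioms]) (rule term_in_N | assumption)+
    also have "\<dots> = 0"
      using \<phi> N v nat_trans_kills_collapse[OF N \<phi> V0 m _ _ v] subset_small_subset
      by (simp add: FA_nat_trans_def FA_submodule_def collapse_in_FA_hom[OF m])
    finally show ?thesis .
  qed
qed

theorem composition_factor_nonzero_at_Suc:
  assumes simple: "FA_simple sc V act"
    and cf: "FA_composition_factor sc V act (Ptens_sc :: 'k \<Rightarrow> _) (Pbar_tensor t) (Ptens_act t)"
  shows "V (Suc t) \<noteq> {0}"
proof
  assume V0: "V (Suc t) = {0}"
  from cf obtain N \<phi> where N: "FA_submodule Ptens_sc (Pbar_tensor t) (Ptens_act t) N"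
    and \<phi>: "FA_nat_trans Ptens_sc N (Ptens_act t) sc V act \<phi>" and onto: "\<forall>m. \<phi> m ` N m = V m"
    unfolding FA_composition_factor_def FA_quotient_of_def by blast
  have "V m = {0}" for m
    using onto[rule_format, of m] nat_trans_from_Pbar_tensor_zero[OF N \<phi> V0] zero_in_V[of m] by auto
  then show False using simple unfolding FA_simple_def by blast
qed

end

section \<open>Simple modules that vanish on the empty set\<close>

definition basis_vec :: "nat \<Rightarrow> nat \<Rightarrow> 'k::field" where
  "basis_vec z = (\<lambda>w. if w = z then 1 else 0)"

lemma pushforward_basis_vec:
  assumes f: "f \<in> FA_hom X X'" and z: "z < X"
  shows "pushforward f X (basis_vec z) = (basis_vec (f z) :: nat \<Rightarrow> 'k::field)"
proof
  fix w
  have "(\<Sum>x\<in>{x\<in>{..<X}. f x = w}. basis_vec z x) = (\<Sum>x\<in>{x\<in>{..<X}. f x = w}. if x = z then 1 else (0::'k))"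
    by (simp add: basis_vec_def)
  also have "\<dots> = (if f z = w then 1 else 0)" using z by simp
  finally show "pushforward f X (basis_vec z) w = (basis_vec (f z) :: nat \<Rightarrow> 'k) w"
    by (auto simp: pushforward_def basis_vec_def)
qed

lemma pure_tensor_cong_below:
  assumes "\<And>i w. i < n \<Longrightarrow> w < X \<Longrightarrow> a i w = b i w"
  shows "pure_tensor n X a = pure_tensor n X b"
  unfolding pure_tensor_def
proof (intro ext if_cong refl)
  fix g assume "g \<in> FA_hom n X"
  then show "(\<Prod>i<n. a i (g i)) = (\<Prod>i<n. b i (g i))"
    using assms by (intro prod.cong) (auto simp: FA_hom_def PiE_iff)
qed

lemma prod_fun_upd:
  fixes b :: "nat \<Rightarrow> nat \<Rightarrow> 'k::field"
  assumes "i < n"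
  shows "(\<Prod>j<n. (b(i := u)) j (g j)) = u (g i) * (\<Prod>j\<in>{..<n} - {i}. b j (g j))"
proof -
  have "(\<Prod>j<n. (b(i := u)) j (g j)) = (b(i := u)) i (g i) * (\<Prod>j\<in>{..<n} - {i}. (b(i := u)) j (g j))"
    using assms by (metis finite_lessThan lessThan_iff prod.remove)
  also have "(\<Prod>j\<in>{..<n} - {i}. (b(i := u)) j (g j)) = (\<Prod>j\<in>{..<n} - {i}. b j (g j))"
    by (rule prod.cong) auto
  finally show ?thesis by simp
qed

lemma pure_tensor_update_add:
  assumes "i < n"
  shows "pure_tensor n X (b(i := u + w)) = pure_tensor n X (b(i := u)) + pure_tensor n X (b(i := w))"
  unfolding pure_tensor_def prod_fun_upd[OF assms] by (auto simp: fun_eq_iff distrib_right)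

lemma pure_tensor_update_scale:
  assumes "i < n"
  shows "pure_tensor n X (b(i := (\<lambda>w. c * u w))) = Ptens_sc c (pure_tensor n X (b(i := u)))"
  unfolding pure_tensor_def Ptens_sc_def prod_fun_upd[OF assms] by (auto simp: fun_eq_iff)

(* pad s m z X v is v \<otimes> [z]^{\<otimes>(m-s)}, an element of P_m(X) for v in P_s(X). *)
definition pad :: "nat \<Rightarrow> nat \<Rightarrow> nat \<Rightarrow> nat \<Rightarrow> ((nat \<Rightarrow> nat) \<Rightarrow> 'k::field) \<Rightarrow> (nat \<Rightarrow> nat) \<Rightarrow> 'k" where
  "pad s m z X v = (\<lambda>g. if g \<in> FA_hom m X \<and> (\<forall>i\<in>{s..<m}. g i = z) then v (restrict g {..<s}) else 0)"

lemma pad_add: "pad s m z X (u + w) = pad s m z X u + pad s m z X w"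
  by (simp add: pad_def fun_eq_iff)

lemma pad_scale: "pad s m z X (Ptens_sc c u) = Ptens_sc c (pad s m z X u)"
  by (simp add: pad_def Ptens_sc_def fun_eq_iff)

lemma pad_zero [simp]: "pad s m z X 0 = 0"
  by (simp add: pad_def fun_eq_iff)

lemma pad_pure_tensor:
  assumes sm: "s \<le> m"
  shows "pad s m z X (pure_tensor s X a) = pure_tensor m X (\<lambda>i. if i < s then a i else basis_vec z)"
proof
  fix g
  show "pad s m z X (pure_tensor s X a) g = pure_tensor m X (\<lambda>i. if i < s then a i else basis_vec z) g"
  proof (cases "g \<in> FA_hom m X")
    case True
    then have restr: "restrict g {..<s} \<in> FA_hom s X"
      using sm by (auto simp: FA_hom_def PiE_iff)
    have prod_split: "(\<Prod>i<m. (if i < s then a i else basis_vec z) (g i)) =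
        (\<Prod>i<s. a i (g i)) * (\<Prod>i\<in>{s..<m}. basis_vec z (g i))"
      using prod.union_disjoint[of "{..<s}" "{s..<m}" "\<lambda>i. (if i < s then a i else basis_vec z) (g i)"] sm
      by (simp add: ivl_disj_un_one(2)[symmetric, of s m] ivl_disj_int_one)
    have restr_prod: "(\<Prod>i<s. a i (restrict g {..<s} i)) = (\<Prod>i<s. a i (g i))"
      by (rule prod.cong) auto
    have "pad s m z X (pure_tensor s X a) g = (if \<forall>i\<in>{s..<m}. g i = z then \<Prod>i<s. a i (g i) else 0)"
      using True restr by (simp add: pad_def pure_tensor_def restr_prod)
    also have "\<dots> = (\<Prod>i<s. a i (g i)) * (\<Prod>i\<in>{s..<m}. basis_vec z (g i))"
      by (auto simp: basis_vec_def intro: prod_zero)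
    also have "\<dots> = pure_tensor m X (\<lambda>i. if i < s then a i else basis_vec z) g"
      using True prod_split by (simp add: pure_tensor_def)
    finally show ?thesis .
  next
    case False
    then show ?thesis by (simp add: pad_def pure_tensor_def)
  qed
qed

context FA_mod
begin

definition yoneda :: "nat \<Rightarrow> 'v \<Rightarrow> nat \<Rightarrow> ((nat \<Rightarrow> nat) \<Rightarrow> 'k) \<Rightarrow> 'v" where
  "yoneda m x X u = (\<Sum>g\<in>FA_hom m X. sc (u g) (act g m X x))"

lemma yoneda_in: "x \<in> V m \<Longrightarrow> yoneda m x X u \<in> V X"
  unfolding yoneda_def by (intro sum_in_V scale_in_V act_in) auto

lemma yoneda_add: "yoneda m x X (u + w) = yoneda m x X u + yoneda m x X w"
  unfolding yoneda_def by (simp add: scale_left_distrib sum.distrib)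

lemma yoneda_scale: "yoneda m x X (Ptens_sc c u) = sc c (yoneda m x X u)"
  unfolding yoneda_def Ptens_sc_def by (simp add: scale_sum_right)

lemma yoneda_zero [simp]: "yoneda m x X 0 = 0"
  unfolding yoneda_def by simp

lemma yoneda_natural:
  assumes x: "x \<in> V m" and f: "f \<in> FA_hom X X'"
  shows "yoneda m x X' (Ptens_act m f X X' u) = act f X X' (yoneda m x X u)"
proof -
  have "yoneda m x X' (Ptens_act m f X X' u) =
      (\<Sum>g'\<in>FA_hom m X'. \<Sum>g\<in>{g\<in>FA_hom m X. compose {..<m} f g = g'}. sc (u g) (act (compose {..<m} f g) m X' x))"
    unfolding yoneda_def Ptens_act_def atLeast0LessThan by (simp add: scale_sum_left)
  also have "\<dots> = (\<Sum>g\<in>FA_hom m X. sc (u g) (act (compose {..<m} f g) m X' x))"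
    by (rule sum.group) (auto intro: compose_in_FA_hom[OF f])
  also have "\<dots> = act f X X' (yoneda m x X u)"
    unfolding yoneda_def using x
    by (simp add: act_sum[OF f] act_scale[OF f] act_compose[OF _ f] scale_in_V act_in)
  finally show ?thesis .
qed

lemma yoneda_identity:
  assumes x: "x \<in> V m"
  shows "yoneda m x m (pure_tensor m m basis_vec) = x"
proof -
  let ?id = "restrict id {..<m}"
  have idhom: "?id \<in> FA_hom m m" by (simp add: FA_hom_def)
  have pt: "pure_tensor m m basis_vec g = (if g = ?id then 1 else 0)" if g: "g \<in> FA_hom m m" for g
  proof (cases "g = ?id")
    case True
    then show ?thesis by (simp add: pure_tensor_def idhom basis_vec_def)
  next
    case False
    have "\<exists>i<m. g i \<noteq> i"
    proof (rule ccontr)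
      assume "\<not> (\<exists>i<m. g i \<noteq> i)"
      then have "g = ?id" using g by (auto simp: FA_hom_def PiE_iff extensional_def fun_eq_iff)
      then show False using False by simp
    qed
    then obtain i where i: "i < m" "g i \<noteq> i" by blast
    then have "(\<Prod>i<m. basis_vec i (g i)) = 0"
      by (intro prod_zero) (auto simp: basis_vec_def intro!: bexI[of _ i])
    then show ?thesis using False g by (simp add: pure_tensor_def)
  qed
  have "yoneda m x m (pure_tensor m m basis_vec) = (\<Sum>g\<in>FA_hom m m. if g = ?id then act g m m x else 0)"
    unfolding yoneda_def by (intro sum.cong refl) (simp add: pt)
  also have "\<dots> = x" using idhom act_id[OF x] by simp
  finally show ?thesis .
qed

lemma yoneda_involution:
  assumes p: "p \<in> FA_hom m m" and pp: "\<And>i. i < m \<Longrightarrow> p (p i) = i" and x: "x \<in> V m"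
  shows "yoneda m (act p m m x) X (pure_tensor m X b) = yoneda m x X (pure_tensor m X (\<lambda>i. b (p i)))"
proof -
  have cc: "compose {..<m} (compose {..<m} g p) p = g" if "g \<in> FA_hom m X" for g
    using that pp p by (auto simp: compose_def fun_eq_iff FA_hom_def PiE_iff extensional_def)
  have ch: "compose {..<m} g p \<in> FA_hom m X" if "g \<in> FA_hom m X" for g
    using compose_in_FA_hom[OF that p] .
  have pimg: "p ` {..<m} = {..<m}"
    using pp p by (force simp: FA_hom_def PiE_iff)
  have pinj: "inj_on p {..<m}" by (metis inj_on_inverseI lessThan_iff pp)
  have ptp: "pure_tensor m X (\<lambda>i. b (p i)) (compose {..<m} g p) = pure_tensor m X b g" if "g \<in> FA_hom m X" for g
  proof -
    have "(\<Prod>i<m. b (p i) (compose {..<m} g p i)) = (\<Prod>i<m. b (p i) (g (p i)))"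
      by (intro prod.cong) (auto simp: compose_def)
    also have "\<dots> = (\<Prod>i\<in>p ` {..<m}. b i (g i))"
      using prod.reindex[OF pinj, of "\<lambda>i. b i (g i)"] by simp
    also have "\<dots> = (\<Prod>i<m. b i (g i))" using pimg by simp
    finally show ?thesis using that ch[OF that] by (simp add: pure_tensor_def)
  qed
  have "yoneda m (act p m m x) X (pure_tensor m X b) =
      (\<Sum>g\<in>FA_hom m X. sc (pure_tensor m X b g) (act (compose {..<m} g p) m X x))"
    unfolding yoneda_def by (intro sum.cong refl) (simp add: act_compose[OF p _ x])
  also have "\<dots> = yoneda m x X (pure_tensor m X (\<lambda>i. b (p i)))"
    unfolding yoneda_def
    by (rule sum.reindex_bij_witness[where i="\<lambda>g. compose {..<m} g p" and j="\<lambda>g. compose {..<m} g p"])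
       (auto simp: cc ch ptp)
  finally show ?thesis .
qed

definition vanishes_on_Pbar :: "nat \<Rightarrow> 'v \<Rightarrow> nat set \<Rightarrow> bool" where
  "vanishes_on_Pbar m x S \<longleftrightarrow>
     (\<forall>X b. (\<forall>i\<in>S. b i \<in> Pbar1 X) \<longrightarrow> yoneda m x X (pure_tensor m X b) = 0)"

lemma yoneda_split_off_constant:
  assumes van: "vanishes_on_Pbar m x (insert j S)"
    and X: "0 < X" and j: "j < m" and b: "\<forall>i\<in>S. b i \<in> Pbar1 X"
  shows "yoneda m x X (pure_tensor m X b) =
    sc (\<Sum>w<X. b j w) (yoneda m x X (pure_tensor m X (b(j := basis_vec 0))))"
proof -
  define c where "c = (\<Sum>w<X. b j w)"
  define d where "d = (\<lambda>w. (if w < X then b j w else 0) - c * basis_vec 0 w)"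
  have "(\<Sum>w<X. d w) = c - c * (\<Sum>w<X. basis_vec 0 w)"
    unfolding d_def c_def by (simp add: sum_subtractf sum_distrib_left)
  also have "\<dots> = 0" using X by (simp add: basis_vec_def)
  finally have "d \<in> Pbar1 X" using X by (simp add: Pbar1_def d_def basis_vec_def)
  then have "yoneda m x X (pure_tensor m X (b(j := d))) = 0"
    using van b unfolding vanishes_on_Pbar_def by simp
  moreover have "pure_tensor m X b = pure_tensor m X (b(j := d + (\<lambda>w. c * basis_vec 0 w)))"
    by (rule pure_tensor_cong_below) (auto simp: d_def)
  ultimately show ?thesis
    by (simp add: pure_tensor_update_add[OF j] pure_tensor_update_scale[OF j] yoneda_add yoneda_scale c_def)
qed

lemma yoneda_split_off_constants:
  assumes van: "\<forall>j\<in>J. vanishes_on_Pbar m x (insert j S)"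
    and X: "0 < X" and J: "finite J" "J \<subseteq> {..<m}" "J \<inter> S = {}" and b: "\<forall>i\<in>S. b i \<in> Pbar1 X"
  shows "yoneda m x X (pure_tensor m X b) =
    sc (\<Prod>j\<in>J. \<Sum>w<X. b j w) (yoneda m x X (pure_tensor m X (\<lambda>k. if k \<in> J then basis_vec 0 else b k)))"
  using J van
proof (induction J rule: finite_induct)
  case (insert j J)
  define bJ where "bJ = (\<lambda>k. if k \<in> J then basis_vec 0 else b k)"
  have "\<forall>i\<in>S. bJ i \<in> Pbar1 X" using b insert.prems by (auto simp: bJ_def)
  then have "yoneda m x X (pure_tensor m X bJ) =
      sc (\<Sum>w<X. bJ j w) (yoneda m x X (pure_tensor m X (bJ(j := basis_vec 0))))"
    using insert.prems X by (intro yoneda_split_off_constant) auto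
  moreover have "bJ j = b j" using insert.hyps by (simp add: bJ_def)
  moreover have "bJ(j := basis_vec 0) = (\<lambda>k. if k \<in> insert j J then basis_vec 0 else b k)"
    by (auto simp: bJ_def fun_eq_iff)
  ultimately show ?case
    using insert unfolding bJ_def by (simp add: mult.commute)
qed simp

lemma yoneda_basis_vec_independent:
  assumes van: "\<forall>j\<in>{s..<m}. vanishes_on_Pbar m x (insert j {..<s})"
    and z: "z < X" and a: "\<forall>i<s. a i \<in> Pbar1 X"
  shows "yoneda m x X (pure_tensor m X (\<lambda>i. if i < s then a i else basis_vec z)) =
    yoneda m x X (pure_tensor m X (\<lambda>i. if i < s then a i else basis_vec 0))"
proof -
  have X: "0 < X" using z by simp
  have reduce: "yoneda m x X (pure_tensor m X (\<lambda>i. if i < s then a i else basis_vec z')) =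
      yoneda m x X (pure_tensor m X (\<lambda>k. if k \<in> {s..<m} then basis_vec 0 else if k < s then a k else basis_vec z'))"
    if z': "z' < X" for z'
  proof -
    have "(\<Prod>j\<in>{s..<m}. \<Sum>w<X. (if j < s then a j else basis_vec z') w) = 1"
      using z' by (intro prod.neutral) (simp add: basis_vec_def)
    moreover have "finite {s..<m}" "{s..<m} \<subseteq> {..<m}" "{s..<m} \<inter> {..<s} = {}" by auto
    ultimately show ?thesis
      using yoneda_split_off_constants[OF van X, of "\<lambda>i. if i < s then a i else basis_vec z'"] a by simp
  qed
  have "pure_tensor m X (\<lambda>k. if k \<in> {s..<m} then basis_vec 0 else if k < s then a k else basis_vec z) =
      pure_tensor m X (\<lambda>k. if k \<in> {s..<m} then basis_vec 0 else if k < s then a k else basis_vec 0)"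
    by (rule pure_tensor_cong) auto
  then show ?thesis using reduce[OF z] reduce[OF X] by simp
qed

lemma yoneda_pad_natural:
  assumes van: "\<forall>j\<in>{s..<m}. vanishes_on_Pbar m x (insert j {..<s})"
    and sm: "s \<le> m" and x: "x \<in> V m" and f: "f \<in> FA_hom X X'" and v: "v \<in> Pbar_tensor s X"
  shows "yoneda m x X' (pad s m 0 X' (Ptens_act s f X X' v)) = act f X X' (yoneda m x X (pad s m 0 X v))"
proof (cases "X = 0")
  case True
  then have "v = 0" using v by (simp add: Pbar_tensor_def)
  then show ?thesis by (simp add: act_zero[OF f])
next
  case False
  then have X: "0 < X" by simp
  have X': "0 < X'" and f0: "f 0 < X'" using f X by (auto simp: FA_hom_def PiE_iff)
  from v X show ?thesis
  proof (induction rule: Pbar_tensor_induct)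
    case zero
    show ?case by (simp only: Ptens_act_zero pad_zero yoneda_zero act_zero[OF f])
  next
    case (step c a w)
    let ?pad = "\<lambda>b z. \<lambda>i. if i < s then b i else basis_vec z"
    have push_a: "\<forall>i<s. pushforward f X (a i) \<in> Pbar1 X'"
      using step.hyps pushforward_in_Pbar1[OF f] by blast
    have "pure_tensor m X' (\<lambda>i. pushforward f X (?pad a 0 i)) = pure_tensor m X' (?pad (\<lambda>i. pushforward f X (a i)) (f 0))"
      by (rule pure_tensor_cong) (simp add: pushforward_basis_vec[OF f X])
    then have "act f X X' (yoneda m x X (pad s m 0 X (pure_tensor s X a))) =
        yoneda m x X' (pure_tensor m X' (?pad (\<lambda>i. pushforward f X (a i)) (f 0)))"
      by (simp add: pad_pure_tensor[OF sm] yoneda_natural[OF x f, symmetric] Ptens_act_pure_tensor[OF f])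
    also have "\<dots> = yoneda m x X' (pad s m 0 X' (Ptens_act s f X X' (pure_tensor s X a)))"
      using yoneda_basis_vec_independent[OF van f0 push_a]
      by (simp add: pad_pure_tensor[OF sm] Ptens_act_pure_tensor[OF f])
    finally have pure: "yoneda m x X' (pad s m 0 X' (Ptens_act s f X X' (pure_tensor s X a))) =
        act f X X' (yoneda m x X (pad s m 0 X (pure_tensor s X a)))" ..
    show ?case
      by (simp only: Ptens_act_add Ptens_act_scale pad_add pad_scale yoneda_add yoneda_scale
          act_add[OF f] act_scale[OF f] scale_in_V yoneda_in[OF x] pure step.IH)
  qed
qed

lemma quotient_of_Pbar_tensor_if_vanishing:
  assumes simple: "FA_simple sc V act" and x: "x \<in> V m" and sm: "s \<le> m" and m: "0 < m"
    and nonvan: "\<not> vanishes_on_Pbar m x {..<s}"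
    and van: "\<forall>j\<in>{s..<m}. vanishes_on_Pbar m x (insert j {..<s})"
  shows "FA_quotient_of Ptens_sc (Pbar_tensor s) (Ptens_act s) sc V act"
proof -
  define \<psi> where "\<psi> X v = yoneda m x X (pad s m 0 X v)" for X v
  have nat: "FA_nat_trans Ptens_sc (Pbar_tensor s) (Ptens_act s) sc V act \<psi>"
    unfolding FA_nat_trans_def
  proof (intro conjI allI ballI impI)
    fix X v show "\<psi> X v \<in> V X" by (simp add: \<psi>_def yoneda_in[OF x])
  next
    fix X u w show "\<psi> X (u + w) = \<psi> X u + \<psi> X w" by (simp only: \<psi>_def pad_add yoneda_add)
  next
    fix X c u show "\<psi> X (Ptens_sc c u) = sc c (\<psi> X u)" by (simp only: \<psi>_def pad_scale yoneda_scale)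
  next
    fix X X' f and v :: "(nat \<Rightarrow> nat) \<Rightarrow> 'k" assume "f \<in> FA_hom X X'" "v \<in> Pbar_tensor s X"
    then show "\<psi> X' (Ptens_act s f X X' v) = act f X X' (\<psi> X v)"
      unfolding \<psi>_def by (rule yoneda_pad_natural[OF van sm x])
  qed
  obtain X b where b: "\<forall>i<s. b i \<in> Pbar1 X" and nz: "yoneda m x X (pure_tensor m X b) \<noteq> 0"
    using nonvan unfolding vanishes_on_Pbar_def by auto
  have X: "0 < X"
  proof (rule ccontr)
    assume "\<not> 0 < X"
    then have "FA_hom m X = {}" using m by (auto simp: FA_hom_def PiE_eq_empty_iff)
    then show False using nz by (simp add: yoneda_def)
  qed
  have J: "finite {s..<m}" "{s..<m} \<subseteq> {..<m}" "{s..<m} \<inter> {..<s} = {}" by auto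
  have "yoneda m x X (pure_tensor m X b) = sc (\<Prod>j\<in>{s..<m}. \<Sum>w<X. b j w)
      (yoneda m x X (pure_tensor m X (\<lambda>k. if k \<in> {s..<m} then basis_vec 0 else b k)))"
    using b by (intro yoneda_split_off_constants[OF van X J]) auto
  then have "yoneda m x X (pure_tensor m X (\<lambda>k. if k \<in> {s..<m} then basis_vec 0 else b k)) \<noteq> 0"
    using nz by auto
  moreover have "pure_tensor m X (\<lambda>k. if k \<in> {s..<m} then basis_vec 0 else b k) = pad s m 0 X (pure_tensor s X b)"
    unfolding pad_pure_tensor[OF sm] by (rule pure_tensor_cong) auto
  ultimately have "\<psi> X (pure_tensor s X b) \<noteq> 0" by (simp add: \<psi>_def)
  moreover have "pure_tensor s X b \<in> Pbar_tensor s X"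
    using X b by (rule pure_tensor_in_Pbar_tensor)
  ultimately show ?thesis
    by (intro quotient_of_nonzero_nat_trans[OF simple FA_module_Pbar_tensor nat])
qed

lemma nonvanishing_transposition:
  assumes x: "x \<in> V m" and j: "s \<le> j" "j < m"
    and nonvan: "\<not> vanishes_on_Pbar m x (insert j {..<s})"
  shows "\<exists>x'\<in>V m. \<not> vanishes_on_Pbar m x' {..<Suc s}"
proof -
  obtain X b where b: "\<forall>i\<in>insert j {..<s}. b i \<in> Pbar1 X"
    and nz: "yoneda m x X (pure_tensor m X b) \<noteq> 0"
    using nonvan unfolding vanishes_on_Pbar_def by auto
  define \<tau> where "\<tau> = restrict (\<lambda>i. if i = s then j else if i = j then s else i) {..<m}"
  have \<tau>: "\<tau> \<in> FA_hom m m" using j by (auto simp: \<tau>_def FA_hom_def)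
  have \<tau>\<tau>: "\<And>i. i < m \<Longrightarrow> \<tau> (\<tau> i) = i" using j by (auto simp: \<tau>_def)
  have "yoneda m (act \<tau> m m x) X (pure_tensor m X (\<lambda>i. b (\<tau> i))) =
      yoneda m x X (pure_tensor m X (\<lambda>i. b (\<tau> (\<tau> i))))"
    by (rule yoneda_involution[OF \<tau> \<tau>\<tau> x])
  also have "pure_tensor m X (\<lambda>i. b (\<tau> (\<tau> i))) = pure_tensor m X b"
    by (rule pure_tensor_cong) (simp add: \<tau>\<tau>)
  finally have nz': "yoneda m (act \<tau> m m x) X (pure_tensor m X (\<lambda>i. b (\<tau> i))) \<noteq> 0"
    using nz by simp
  have b': "\<forall>i\<in>{..<Suc s}. b (\<tau> i) \<in> Pbar1 X"
  proof
    fix i assume "i \<in> {..<Suc s}"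
    then show "b (\<tau> i) \<in> Pbar1 X" using b j by (cases "i = s") (auto simp: \<tau>_def)
  qed
  have "\<not> vanishes_on_Pbar m (act \<tau> m m x) {..<Suc s}"
    unfolding vanishes_on_Pbar_def not_all not_imp
    by (intro exI[of _ X] exI[of _ "\<lambda>i. b (\<tau> i)"] conjI b' nz')
  then show ?thesis using act_in[OF \<tau> x] by blast
qed

lemma exists_maximal_nonvanishing:
  assumes x0: "x0 \<in> V m" "x0 \<noteq> 0"
  shows "\<exists>x\<in>V m. \<exists>s\<le>m. \<not> vanishes_on_Pbar m x {..<s} \<and>
    (\<forall>j\<in>{s..<m}. vanishes_on_Pbar m x (insert j {..<s}))"
proof -
  define G where "G = {s. s \<le> m \<and> (\<exists>x\<in>V m. \<not> vanishes_on_Pbar m x {..<s})}"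
  have "\<not> vanishes_on_Pbar m x0 {..<0}"
    using yoneda_identity[OF x0(1)] x0(2) unfolding vanishes_on_Pbar_def
    by (auto intro!: exI[of _ m] exI[of _ basis_vec])
  then have G0: "0 \<in> G" using x0 by (auto simp: G_def)
  have finG: "finite G" unfolding G_def by (rule finite_subset[of _ "{..m}"]) auto
  define s where "s = Max G"
  have "s \<in> G" unfolding s_def using finG G0 by (intro Max_in) auto
  then obtain x where x: "x \<in> V m" "\<not> vanishes_on_Pbar m x {..<s}" and sm: "s \<le> m"
    unfolding G_def by blast
  have "vanishes_on_Pbar m x (insert j {..<s})" if j: "s \<le> j" "j < m" for j
  proof (rule ccontr)
    assume "\<not> vanishes_on_Pbar m x (insert j {..<s})"
    then have "Suc s \<in> G"
      using nonvanishing_transposition[OF x(1) j] j by (auto simp: G_def)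
    then have "Suc s \<le> s" unfolding s_def by (rule Max_ge[OF finG])
    then show False by simp
  qed
  then show ?thesis using x sm by (meson atLeastLessThan_iff)
qed

lemma simple_quotient_of_Pbar_tensor:
  assumes simple: "FA_simple sc V act" and V0: "V 0 = {0}"
  shows "\<exists>n. FA_quotient_of Ptens_sc (Pbar_tensor n) (Ptens_act n) sc V act"
proof -
  obtain m where "V m \<noteq> {0}" using simple unfolding FA_simple_def by blast
  then obtain x0 where x0: "x0 \<in> V m" "x0 \<noteq> 0" using zero_in_V by blast
  then have m: "0 < m" using V0 by (cases m) auto
  obtain x s where "x \<in> V m" "s \<le> m" "\<not> vanishes_on_Pbar m x {..<s}"
    "\<forall>j\<in>{s..<m}. vanishes_on_Pbar m x (insert j {..<s})"
    using exists_maximal_nonvanishing[OF x0] by blast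
  then show ?thesis using quotient_of_Pbar_tensor_if_vanishing[OF simple _ _ m] by blast
qed

end

theorem mainTheorem5:
  fixes sc :: "'k::field \<Rightarrow> 'v::ab_group_add \<Rightarrow> 'v"
    and V :: "nat \<Rightarrow> 'v set"
    and act :: "(nat \<Rightarrow> nat) \<Rightarrow> nat \<Rightarrow> nat \<Rightarrow> 'v \<Rightarrow> 'v"
  assumes "FA_simple sc V act"
  shows "(FA_iso sc V act ((*) :: 'k \<Rightarrow> 'k \<Rightarrow> 'k) K0_val K0_act
          \<or> (\<exists>n. FA_quotient_of (Ptens_sc :: 'k \<Rightarrow> _) (Pbar_tensor n) (Ptens_act n) sc V act))
       \<and> (\<forall>t. FA_composition_factor sc V act (Ptens_sc :: 'k \<Rightarrow> _) (Pbar_tensor t) (Ptens_act t)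
              \<longrightarrow> V (Suc t) \<noteq> {0})"
proof -
  interpret FA_mod sc V act
    using assms by (simp add: FA_simple_def FA_mod_def)
  show ?thesis
    using simple_iso_K0[OF assms] simple_quotient_of_Pbar_tensor[OF assms]
      composition_factor_nonzero_at_Suc[OF assms] by blast
qed

end
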